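(* Let $G$ be a finite nilpotent group of nilpotency class $2$ and let $w\in F_k$ be such that the word map $w:G^k\to G$ is surjective. Then $w$ is $F_k(G)$-automorphic to the word $x_1$, and $P_{w,G}(g)=|G|^{-1}$ for every $g\in G$; in particular $w$ satisfies the Amit–Ashurst bound $P_{w,G}(g)\ge|G|^{-1}$ for all $g\in G$.
   Context: $F_k$ is the free group on $x_1,\dots,x_k$; $P_{w,G}(g):=|\{(g_1,\dots,g_k)\in G^k: w(g_1,\dots,g_k)=g\}|/|G|^k$. The group $F_k(G)$ consists of the word maps $G^k\to G$ induced by elements of $F_k$, under pointwise multiplication; $w_1,w_2\in F_k$ are $F_k(G)$-automorphic if some group automorphism of $F_k(G)$ sends the word map of $w_1$ to that of $w_2$. *)

theory Defs
  imports "HOL-Algebra.Algebra"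
begin

text \<open>Elements of the free group F_k on x_1,...,x_k are represented by words:
  lists of letters (i, b) with i < k, where (i, True) stands for x_(i+1) and
  (i, False) for its inverse. Word maps only depend on the group element
  (free reduction does not change the induced map).\<close>

type_synonym letter = "nat \<times> bool"

definition words :: "nat \<Rightarrow> letter list set" where
  "words k = {w. \<forall>l \<in> set w. fst l < k}"

definition gen1 :: "letter list" where
  "gen1 = [(0, True)]"

definition tuples :: "('a, 'b) monoid_scheme \<Rightarrow> nat \<Rightarrow> (nat \<Rightarrow> 'a) set" where
  "tuples G k = {0..<k} \<rightarrow>\<^sub>E carrier G"

fun eval_word :: "('a, 'b) monoid_scheme \<Rightarrow> letter list \<Rightarrow> (nat \<Rightarrow> 'a) \<Rightarrow> 'a" where
  "eval_word G [] g = \<one>\<^bsub>G\<^esub>"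
| "eval_word G ((i, b) # w) g =
     (if b then g i else inv\<^bsub>G\<^esub> (g i)) \<otimes>\<^bsub>G\<^esub> eval_word G w g"

definition word_map :: "('a, 'b) monoid_scheme \<Rightarrow> nat \<Rightarrow> letter list \<Rightarrow> (nat \<Rightarrow> 'a) \<Rightarrow> 'a" where
  "word_map G k w = (\<lambda>g \<in> tuples G k. eval_word G w g)"

definition word_map_group :: "('a, 'b) monoid_scheme \<Rightarrow> nat \<Rightarrow> ((nat \<Rightarrow> 'a) \<Rightarrow> 'a) monoid" where
  "word_map_group G k =
     \<lparr> carrier = word_map G k ` words k,
       monoid.mult = (\<lambda>f h. \<lambda>g \<in> tuples G k. f g \<otimes>\<^bsub>G\<^esub> h g),
       one = (\<lambda>g \<in> tuples G k. \<one>\<^bsub>G\<^esub>) \<rparr>"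

definition automorphic :: "('a, 'b) monoid_scheme \<Rightarrow> nat \<Rightarrow> letter list \<Rightarrow> letter list \<Rightarrow> bool" where
  "automorphic G k w1 w2 \<longleftrightarrow>
     (\<exists>\<phi> \<in> iso (word_map_group G k) (word_map_group G k).
        \<phi> (word_map G k w1) = word_map G k w2)"

definition word_prob :: "('a, 'b) monoid_scheme \<Rightarrow> nat \<Rightarrow> letter list \<Rightarrow> 'a \<Rightarrow> real" where
  "word_prob G k w x =
     real (card {g \<in> tuples G k. eval_word G w g = x}) / real (card (carrier G) ^ k)"

definition word_map_surjective :: "('a, 'b) monoid_scheme \<Rightarrow> nat \<Rightarrow> letter list \<Rightarrow> bool" where
  "word_map_surjective G k w \<longleftrightarrow> eval_word G w ` tuples G k = carrier G"

definition commutator :: "('a, 'b) monoid_scheme \<Rightarrow> 'a \<Rightarrow> 'a \<Rightarrow> 'a" where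
  "commutator G x y = inv\<^bsub>G\<^esub> x \<otimes>\<^bsub>G\<^esub> inv\<^bsub>G\<^esub> y \<otimes>\<^bsub>G\<^esub> x \<otimes>\<^bsub>G\<^esub> y"

text \<open>Nilpotent of class exactly 2: non-abelian, and [G,G] \<le> Z(G)
  (equivalently \<gamma>_3(G) = 1, since G' is generated by commutators).\<close>
definition nilpotent_class_2 :: "('a, 'b) monoid_scheme \<Rightarrow> bool" where
  "nilpotent_class_2 G \<longleftrightarrow> group G \<and>
     (\<exists>x \<in> carrier G. \<exists>y \<in> carrier G. x \<otimes>\<^bsub>G\<^esub> y \<noteq> y \<otimes>\<^bsub>G\<^esub> x) \<and>
     (\<forall>x \<in> carrier G. \<forall>y \<in> carrier G. \<forall>z \<in> carrier G.
        commutator G x y \<otimes>\<^bsub>G\<^esub> z = z \<otimes>\<^bsub>G\<^esub> commutator G x y)"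

end

theory Submission
  imports Defs
begin

(*
  In a group of nilpotency class at most 2 commutators are central and bilinear. Hence, writing
  g_i = h_i y^(c_i), a word w with exponent sums e_i satisfies w(g) = w(h) y^A [y,t] with
  A = sum c_i e_i and t independent of y; if A is coprime to |G|, then y |-> y^A [y,t] is a
  conjugate of y |-> y^A and so a bijection. For c_1 = 1 this makes the substitution
  x_1 |-> w, x_i |-> x_i x_1^(-c_i) (i > 1) a bijection of G^k. Precomposition with it is an
  automorphism of F_k(G) taking x_1 to w, and it maps the fibres of w onto the fibres of the
  first coordinate, each of size |G|^(k-1).
  A suitable c exists unless some prime p dividing |G| divides every e_i. In that case
  surjectivity of w makes every element of G/G' a p-th power; by bilinearity every commutator,
  hence every element of G', is then a p-th power of an element of G'. So x |-> x^p is injective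
  on G/G' and on G', and G has no element of order p, contradicting Cauchy's theorem.
*)

section \<open>Words, word maps and substitutions\<close>

definition inverse_word :: "letter list \<Rightarrow> letter list" where
  "inverse_word u = rev (map (\<lambda>(i, b). (i, \<not> b)) u)"

definition power_word :: "nat \<Rightarrow> int \<Rightarrow> letter list" where
  "power_word i m =
     (if m \<ge> 0 then replicate (nat m) (i, True) else replicate (nat (- m)) (i, False))"

definition subst_word :: "(nat \<Rightarrow> letter list) \<Rightarrow> letter list \<Rightarrow> letter list" where
  "subst_word \<sigma> w = concat (map (\<lambda>(i, b). if b then \<sigma> i else inverse_word (\<sigma> i)) w)"

fun weighted_exponent_sum :: "(nat \<Rightarrow> int) \<Rightarrow> letter list \<Rightarrow> int" where
  "weighted_exponent_sum c [] = 0"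
| "weighted_exponent_sum c ((i, b) # w) = (if b then c i else - c i) + weighted_exponent_sum c w"

definition exponent_sum :: "letter list \<Rightarrow> nat \<Rightarrow> int" where
  "exponent_sum w i = weighted_exponent_sum (\<lambda>j. of_bool (j = i)) w"

lemma exponent_sum_Nil [simp]: "exponent_sum [] i = 0"
  by (simp add: exponent_sum_def)

lemma exponent_sum_Cons [simp]:
  "exponent_sum ((j, b) # w) i = (if j = i then (if b then 1 else - 1) else 0) + exponent_sum w i"
  by (simp add: exponent_sum_def)

lemma words_Nil [simp]: "[] \<in> words k"
  by (simp add: words_def)

lemma words_Cons [simp]: "(i, b) # w \<in> words k \<longleftrightarrow> i < k \<and> w \<in> words k"
  by (auto simp: words_def)

lemma words_append [simp]: "u @ v \<in> words k \<longleftrightarrow> u \<in> words k \<and> v \<in> words k"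
  by (auto simp: words_def)

lemma words_inverse_word [simp]: "inverse_word u \<in> words k \<longleftrightarrow> u \<in> words k"
  by (auto simp: words_def inverse_word_def)

lemma power_word_in_words: "i < k \<Longrightarrow> power_word i m \<in> words k"
  by (auto simp: words_def power_word_def)

lemma subst_word_in_words:
  "(\<And>i. i < k \<Longrightarrow> \<sigma> i \<in> words k) \<Longrightarrow> w \<in> words k \<Longrightarrow> subst_word \<sigma> w \<in> words k"
  by (induction w) (auto simp: subst_word_def)

lemma gen1_in_words: "0 < k \<Longrightarrow> gen1 \<in> words k"
  by (simp add: gen1_def)

lemma subst_word_gen1: "subst_word \<sigma> gen1 = \<sigma> 0"
  by (simp add: subst_word_def gen1_def)

lemma tuples_in_carrier: "g \<in> tuples G k \<Longrightarrow> i < k \<Longrightarrow> g i \<in> carrier G"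
  by (auto simp: tuples_def)

lemma finite_tuples: "finite (carrier G) \<Longrightarrow> finite (tuples G k)"
  by (simp add: tuples_def finite_PiE)

lemma card_tuples_with_first:
  assumes "0 < k" and "x \<in> carrier G"
  shows "card {h \<in> tuples G k. h 0 = x} = card (carrier G) ^ (k - 1)"
proof -
  have "{h \<in> tuples G k. h 0 = x} = (\<Pi>\<^sub>E i\<in>{0..<k}. if i = 0 then {x} else carrier G)"
    using assms by (auto simp: tuples_def PiE_def Pi_def split: if_splits)
  also have "card \<dots> = (\<Prod>i\<in>{0..<k}. if i = 0 then 1 else card (carrier G))"
    by (simp add: card_PiE if_distrib cong: if_cong)
  also have "\<dots> = card (carrier G) ^ (k - 1)"
    using assms(1) by (simp add: prod.If_cases flip: Diff_eq)
  finally show ?thesis .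
qed

lemma weighted_exponent_sum_eq_sum:
  "w \<in> words k \<Longrightarrow> weighted_exponent_sum c w = (\<Sum>i\<in>{0..<k}. c i * exponent_sum w i)"
  by (induction c w rule: weighted_exponent_sum.induct)
    (auto simp: exponent_sum_def sum.distrib distrib_left of_bool_def if_distrib cong: if_cong)

definition substitution_map ::
    "('a, 'b) monoid_scheme \<Rightarrow> nat \<Rightarrow> (nat \<Rightarrow> letter list) \<Rightarrow> (nat \<Rightarrow> 'a) \<Rightarrow> nat \<Rightarrow> 'a" where
  "substitution_map G k \<sigma> g = (\<lambda>i\<in>{0..<k}. eval_word G (\<sigma> i) g)"

context group
begin

lemma eval_word_closed [simp]:
  "w \<in> words k \<Longrightarrow> (\<And>i. i < k \<Longrightarrow> g i \<in> carrier G) \<Longrightarrow> eval_word G w g \<in> carrier G"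
  by (induction w) auto

lemma eval_word_cong:
  "w \<in> words k \<Longrightarrow> (\<And>i. i < k \<Longrightarrow> g i = g' i) \<Longrightarrow> eval_word G w g = eval_word G w g'"
  by (induction w) auto

lemma eval_word_append:
  assumes "u \<in> words k" and "v \<in> words k" and "\<And>i. i < k \<Longrightarrow> g i \<in> carrier G"
  shows "eval_word G (u @ v) g = eval_word G u g \<otimes> eval_word G v g"
  using assms by (induction u) (auto simp: m_assoc)

lemma eval_word_inverse_word:
  assumes "u \<in> words k" and "\<And>i. i < k \<Longrightarrow> g i \<in> carrier G"
  shows "eval_word G (inverse_word u) g = inv (eval_word G u g)"
  using assms
proof (induction u)
  case (Cons l u)
  obtain i b where l: "l = (i, b)" by fastforce
  have "inverse_word (l # u) = inverse_word u @ [(i, \<not> b)]"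
    by (simp add: inverse_word_def l)
  then show ?case
    using Cons l by (auto simp: eval_word_append[of _ k] inv_mult_group)
qed (simp add: inverse_word_def)

lemma eval_word_power_word:
  assumes "i < k" and "\<And>i. i < k \<Longrightarrow> g i \<in> carrier G"
  shows "eval_word G (power_word i m) g = g i [^] m"
proof -
  have gi: "g i \<in> carrier G" using assms by blast
  have pos: "eval_word G (replicate n (i, True)) g = g i [^] n" for n
  proof (induction n)
    case (Suc n)
    have "eval_word G (replicate (Suc n) (i, True)) g = g i \<otimes> g i [^] n"
      using Suc by simp
    then show ?case by (simp only: nat_pow_Suc2[OF gi])
  qed simp
  have neg: "eval_word G (replicate n (i, False)) g = inv (g i [^] n)" for n
  proof (induction n)
    case (Suc n)
    have "eval_word G (replicate (Suc n) (i, False)) g = inv (g i) \<otimes> inv (g i [^] n)"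
      using Suc by simp
    then show ?case using gi by (simp add: inv_mult_group)
  qed simp
  show ?thesis
  proof (cases "m \<ge> 0")
    case True
    then show ?thesis using pos by (simp add: power_word_def flip: int_pow_int)
  next
    case False
    then have "m = - int (nat (- m))" by simp
    then have "g i [^] m = inv (g i [^] nat (- m))" using gi by (metis int_pow_neg_int)
    then show ?thesis using False neg by (simp add: power_word_def)
  qed
qed

lemma eval_word_subst_word:
  assumes \<sigma>: "\<And>i. i < k \<Longrightarrow> \<sigma> i \<in> words k" and "w \<in> words k"
    and g: "\<And>i. i < k \<Longrightarrow> g i \<in> carrier G"
  shows "eval_word G (subst_word \<sigma> w) g = eval_word G w (\<lambda>i. eval_word G (\<sigma> i) g)"
  using assms(2)
proof (induction w)
  case (Cons l w)
  obtain i b where l: "l = (i, b)" by fastforce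
  with Cons.prems have i: "i < k" and w: "w \<in> words k" by auto
  have "subst_word \<sigma> (l # w) = (if b then \<sigma> i else inverse_word (\<sigma> i)) @ subst_word \<sigma> w"
    by (simp add: subst_word_def l)
  then have "eval_word G (subst_word \<sigma> (l # w)) g
      = eval_word G (if b then \<sigma> i else inverse_word (\<sigma> i)) g \<otimes> eval_word G (subst_word \<sigma> w) g"
    using \<sigma>[OF i] w \<sigma> g by (simp add: eval_word_append[of _ k] subst_word_in_words)
  then show ?case
    using Cons.IH[OF w] eval_word_inverse_word[OF \<sigma>[OF i] g] l by simp
qed (simp add: subst_word_def)

lemma carrier_word_map_group: "carrier (word_map_group G k) = word_map G k ` words k"
  by (simp add: word_map_group_def)

lemma word_map_mult:
  assumes "u \<in> words k" and "v \<in> words k"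
  shows "word_map G k u \<otimes>\<^bsub>word_map_group G k\<^esub> word_map G k v = word_map G k (u @ v)"
  using assms by (auto simp: word_map_group_def word_map_def eval_word_append tuples_in_carrier)

lemma word_map_Nil: "word_map G k [] = \<one>\<^bsub>word_map_group G k\<^esub>"
  by (simp add: word_map_group_def word_map_def)

lemma word_map_inverse_word:
  assumes "u \<in> words k"
  shows "word_map G k (inverse_word u @ u) = word_map G k []"
  using assms by (auto simp: word_map_def eval_word_append eval_word_inverse_word tuples_in_carrier)

lemma group_word_map_group: "group (word_map_group G k)"
proof (rule groupI)
  show "\<one>\<^bsub>word_map_group G k\<^esub> \<in> carrier (word_map_group G k)"
    using words_Nil by (auto simp: carrier_word_map_group simp flip: word_map_Nil)
next
  fix f assume "f \<in> carrier (word_map_group G k)"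
  then obtain u where u: "u \<in> words k" and f: "f = word_map G k u"
    by (auto simp: carrier_word_map_group)
  then have "word_map G k (inverse_word u) \<otimes>\<^bsub>word_map_group G k\<^esub> f = \<one>\<^bsub>word_map_group G k\<^esub>"
    by (simp add: word_map_mult word_map_inverse_word word_map_Nil)
  then show "\<exists>g\<in>carrier (word_map_group G k). g \<otimes>\<^bsub>word_map_group G k\<^esub> f = \<one>\<^bsub>word_map_group G k\<^esub>"
    using u by (auto simp: carrier_word_map_group)
qed (auto simp: carrier_word_map_group word_map_mult simp flip: word_map_Nil)

lemma finite_word_map_group:
  assumes "finite (carrier G)"
  shows "finite (carrier (word_map_group G k))"
proof (rule finite_subset)
  show "carrier (word_map_group G k) \<subseteq> tuples G k \<rightarrow>\<^sub>E carrier G"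
    by (auto simp: carrier_word_map_group word_map_def tuples_in_carrier)
  show "finite (tuples G k \<rightarrow>\<^sub>E carrier G)"
    using assms by (simp add: finite_PiE finite_tuples)
qed

context
  fixes k :: nat and \<sigma> :: "nat \<Rightarrow> letter list"
  assumes \<sigma>: "\<And>i. i < k \<Longrightarrow> \<sigma> i \<in> words k"
begin

lemma substitution_map_in_tuples:
  assumes g: "g \<in> tuples G k"
  shows "substitution_map G k \<sigma> g \<in> tuples G k"
proof -
  have "eval_word G (\<sigma> i) g \<in> carrier G" if "i < k" for i
    using \<sigma>[OF that] tuples_in_carrier[OF g] by (rule eval_word_closed)
  then show ?thesis by (auto simp: substitution_map_def tuples_def)
qed

lemma word_map_subst_word:
  assumes "u \<in> words k"
  shows "word_map G k (subst_word \<sigma> u) = (\<lambda>g\<in>tuples G k. word_map G k u (substitution_map G k \<sigma> g))"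
proof
  fix g
  show "word_map G k (subst_word \<sigma> u) g
      = (\<lambda>g\<in>tuples G k. word_map G k u (substitution_map G k \<sigma> g)) g"
  proof (cases "g \<in> tuples G k")
    case True
    have "eval_word G (subst_word \<sigma> u) g = eval_word G u (\<lambda>i. eval_word G (\<sigma> i) g)"
      by (rule eval_word_subst_word[OF \<sigma> assms tuples_in_carrier[OF True]])
    also have "\<dots> = eval_word G u (substitution_map G k \<sigma> g)"
      by (rule eval_word_cong[OF assms]) (simp add: substitution_map_def)
    finally show ?thesis
      using True substitution_map_in_tuples by (simp add: word_map_def)
  qed (simp add: word_map_def)
qed

context
  assumes fin: "finite (carrier G)"
    and inj: "inj_on (substitution_map G k \<sigma>) (tuples G k)"
begin

lemma substitution_map_surj: "substitution_map G k \<sigma> ` tuples G k = tuples G k"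
  using endo_inj_surj[OF finite_tuples[OF fin] _ inj] substitution_map_in_tuples by blast

lemma precompose_substitution_map_iso:
  "(\<lambda>f. \<lambda>g\<in>tuples G k. f (substitution_map G k \<sigma> g))
     \<in> iso (word_map_group G k) (word_map_group G k)"
  (is "?\<psi> \<in> iso ?F ?F")
proof -
  have into: "?\<psi> ` carrier ?F \<subseteq> carrier ?F"
  proof
    fix f assume "f \<in> ?\<psi> ` carrier ?F"
    then obtain u where "u \<in> words k" and "f = ?\<psi> (word_map G k u)"
      by (auto simp: carrier_word_map_group)
    then show "f \<in> carrier ?F"
      using \<sigma> by (simp add: carrier_word_map_group subst_word_in_words flip: word_map_subst_word)
  qed
  have "?\<psi> \<in> hom ?F ?F"
    using into substitution_map_in_tuples by (intro homI) (auto simp: word_map_group_def)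
  moreover have "inj_on ?\<psi> (carrier ?F)"
  proof (rule inj_onI)
    fix f h assume "f \<in> carrier ?F" "h \<in> carrier ?F" and eq: "?\<psi> f = ?\<psi> h"
    then have "f \<in> extensional (tuples G k)" "h \<in> extensional (tuples G k)"
      by (auto simp: carrier_word_map_group word_map_def)
    moreover have "f x = h x" if "x \<in> tuples G k" for x
    proof -
      have "x \<in> substitution_map G k \<sigma> ` tuples G k"
        using that substitution_map_surj by simp
      then obtain g where "g \<in> tuples G k" "x = substitution_map G k \<sigma> g"
        by blast
      then show ?thesis using fun_cong[OF eq, of g] by simp
    qed
    ultimately show "f = h" by (rule extensionalityI)
  qed
  ultimately show ?thesis
    using endo_inj_surj[OF finite_word_map_group[OF fin] into] by (auto simp: iso_def bij_betw_def)
qed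

lemma automorphic_gen1_if_inj_substitution:
  assumes "0 < k" and "\<sigma> 0 = w"
  shows "automorphic G k w gen1"
proof -
  let ?F = "word_map_group G k"
  define \<psi> :: "((nat \<Rightarrow> 'a) \<Rightarrow> 'a) \<Rightarrow> (nat \<Rightarrow> 'a) \<Rightarrow> 'a"
    where "\<psi> = (\<lambda>f. \<lambda>g\<in>tuples G k. f (substitution_map G k \<sigma> g))"
  have \<psi>: "\<psi> \<in> iso ?F ?F"
    unfolding \<psi>_def by (rule precompose_substitution_map_iso)
  have gen1: "word_map G k gen1 \<in> carrier ?F"
    using gen1_in_words[OF assms(1)] by (simp add: carrier_word_map_group)
  have "\<psi> (word_map G k gen1) = word_map G k w"
    using word_map_subst_word[OF gen1_in_words[OF assms(1)]] assms(2)
    by (simp add: \<psi>_def subst_word_gen1)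
  moreover have "inj_on \<psi> (carrier ?F)"
    using \<psi> by (simp add: iso_def bij_betw_def)
  ultimately have "inv_into (carrier ?F) \<psi> (word_map G k w) = word_map G k gen1"
    using gen1 by (metis inv_into_f_f)
  then show ?thesis
    unfolding automorphic_def using group.iso_set_sym[OF group_word_map_group \<psi>] by blast
qed

lemma word_prob_if_inj_substitution:
  assumes "0 < k" and "\<sigma> 0 = w" and x: "x \<in> carrier G"
  shows "word_prob G k w x = 1 / real (card (carrier G))"
proof -
  let ?T = "substitution_map G k \<sigma>" and ?fibre = "{g \<in> tuples G k. eval_word G w g = x}"
  have "?T ` ?fibre = {h \<in> ?T ` tuples G k. h 0 = x}"
    using assms(1,2) by (auto simp: substitution_map_def)
  then have "?T ` ?fibre = {h \<in> tuples G k. h 0 = x}"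
    by (simp only: substitution_map_surj)
  moreover have "inj_on ?T ?fibre"
    using inj by (rule inj_on_subset) blast
  ultimately have "card ?fibre = card {h \<in> tuples G k. h 0 = x}"
    using card_image by fastforce
  also have "\<dots> = card (carrier G) ^ (k - 1)"
    by (rule card_tuples_with_first[OF assms(1) x])
  finally have "card ?fibre = card (carrier G) ^ (k - 1)" .
  moreover have "card (carrier G) ^ k = card (carrier G) ^ (k - 1) * card (carrier G)"
    using assms(1) by (cases k) simp_all
  moreover have "card (carrier G) > 0"
    using fin x by (auto simp: card_gt_0_iff)
  ultimately show ?thesis
    by (simp add: word_prob_def)
qed

end

end

end

section \<open>Groups with central commutators\<close>

context group
begin

lemma mult_inv_cancel_left [simp]: "x \<in> carrier G \<Longrightarrow> y \<in> carrier G \<Longrightarrow> x \<otimes> (inv x \<otimes> y) = y"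
  by (simp flip: m_assoc)

lemma inv_mult_cancel_left [simp]: "x \<in> carrier G \<Longrightarrow> y \<in> carrier G \<Longrightarrow> inv x \<otimes> (x \<otimes> y) = y"
  by (simp flip: m_assoc)

lemma commutator_closed [simp]:
  "x \<in> carrier G \<Longrightarrow> y \<in> carrier G \<Longrightarrow> commutator G x y \<in> carrier G"
  by (simp add: commutator_def)

lemma commutator_one_right [simp]: "x \<in> carrier G \<Longrightarrow> commutator G x \<one> = \<one>"
  by (simp add: commutator_def m_assoc)

lemma inv_commutator:
  "x \<in> carrier G \<Longrightarrow> y \<in> carrier G \<Longrightarrow> inv (commutator G x y) = commutator G y x"
  by (simp add: commutator_def inv_mult_group m_assoc)

lemma conj_eq_mult_commutator:
  "u \<in> carrier G \<Longrightarrow> v \<in> carrier G \<Longrightarrow> inv u \<otimes> v \<otimes> u = v \<otimes> commutator G v u"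
  by (simp add: commutator_def m_assoc flip: m_assoc[of v "inv v"])

end

definition twisted_substitution :: "letter list \<Rightarrow> (nat \<Rightarrow> int) \<Rightarrow> nat \<Rightarrow> letter list" where
  "twisted_substitution w c i = (if i = 0 then w else (i, True) # power_word 0 (- c i))"

lemma twisted_substitution_in_words:
  "0 < k \<Longrightarrow> w \<in> words k \<Longrightarrow> i < k \<Longrightarrow> twisted_substitution w c i \<in> words k"
  by (simp add: twisted_substitution_def power_word_in_words)

lemma (in group) substitution_map_twisted:
  assumes "0 < k" and "g \<in> tuples G k" and "i < k"
  shows "substitution_map G k (twisted_substitution w c) g i
    = (if i = 0 then eval_word G w g else g i \<otimes> g 0 [^] (- c i))"
  using assms by (simp add: substitution_map_def twisted_substitution_def eval_word_power_word
      tuples_in_carrier)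

lemma (in group) untwist_substitution_map:
  assumes k: "0 < k" and c0: "c 0 = 1" and x: "x \<in> tuples G k" and i: "i < k"
  shows "x i = (if i = 0 then \<one> else substitution_map G k (twisted_substitution w c) x i)
    \<otimes> x 0 [^] c i"
  using substitution_map_twisted[OF k x i, of w c] c0 tuples_in_carrier[OF x] k i
  by (simp add: m_assoc flip: int_pow_mult)

locale central_commutator_group = group G for G (structure) +
  assumes commutator_central:
    "\<lbrakk>x \<in> carrier G; y \<in> carrier G; z \<in> carrier G\<rbrakk>
       \<Longrightarrow> commutator G x y \<otimes> z = z \<otimes> commutator G x y"
begin

lemma commutator_mult_left:
  assumes a: "a \<in> carrier G" and b: "b \<in> carrier G" and c: "c \<in> carrier G"
  shows "commutator G (a \<otimes> b) c = commutator G a c \<otimes> commutator G b c"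
proof -
  have "commutator G (a \<otimes> b) c = inv b \<otimes> commutator G a c \<otimes> b \<otimes> commutator G b c"
    using a b c by (simp add: commutator_def m_assoc inv_mult_group flip: m_assoc[of c "inv c"])
  also have "inv b \<otimes> commutator G a c \<otimes> b = commutator G a c"
    using a b c commutator_central[of a c b] by (simp add: m_assoc l_cancel_one')
  finally show ?thesis .
qed

lemma commutator_mult_right:
  assumes a: "a \<in> carrier G" and b: "b \<in> carrier G" and c: "c \<in> carrier G"
  shows "commutator G c (a \<otimes> b) = commutator G c a \<otimes> commutator G c b"
proof -
  have "commutator G c (a \<otimes> b) = inv (commutator G a c \<otimes> commutator G b c)"
    using a b c by (simp add: inv_commutator flip: commutator_mult_left)
  also have "\<dots> = commutator G c b \<otimes> commutator G c a"
    using a b c by (simp add: inv_mult_group inv_commutator)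
  also have "\<dots> = commutator G c a \<otimes> commutator G c b"
    using a b c by (simp add: commutator_central[of c b])
  finally show ?thesis .
qed

lemma commutator_inv_left:
  assumes a: "a \<in> carrier G" and c: "c \<in> carrier G"
  shows "commutator G (inv a) c = inv (commutator G a c)"
proof -
  have "commutator G (inv a) c \<otimes> commutator G a c = \<one>"
    using a c commutator_mult_left[of "inv a" a c] by (simp add: commutator_def m_assoc)
  then show ?thesis using a c by (simp add: inv_equality)
qed

lemma commutator_nat_pow_left:
  assumes a: "a \<in> carrier G" and c: "c \<in> carrier G"
  shows "commutator G (a [^] (n::nat)) c = commutator G a c [^] n"
proof (induction n)
  case (Suc n)
  have "commutator G (a [^] Suc n) c = commutator G (a [^] n) c \<otimes> commutator G a c"
    using a c by (simp add: commutator_mult_left)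
  then show ?case using Suc by simp
qed (simp add: commutator_def a c m_assoc)

lemma commutator_int_pow_left:
  assumes a: "a \<in> carrier G" and c: "c \<in> carrier G"
  shows "commutator G (a [^] (n::int)) c = commutator G a c [^] n"
proof (cases n rule: int_cases2)
  case (nonneg m)
  then show ?thesis using a c by (simp add: int_pow_int commutator_nat_pow_left)
next
  case (nonpos m)
  then show ?thesis
    using a c by (simp add: int_pow_neg int_pow_int commutator_nat_pow_left commutator_inv_left
        nat_pow_inv)
qed

lemma commutator_int_pow_right:
  assumes a: "a \<in> carrier G" and c: "c \<in> carrier G"
  shows "commutator G c (a [^] (n::int)) = commutator G c a [^] n"
proof -
  have "commutator G c (a [^] n) = inv (commutator G a c [^] n)"
    using a c by (simp add: commutator_int_pow_left inv_commutator[of "a [^] n" c, symmetric])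
  also have "\<dots> = commutator G c a [^] n"
    using a c by (simp add: inv_commutator flip: int_pow_inv)
  finally show ?thesis .
qed

lemma int_pow_mult_commutator_shift:
  assumes y: "y \<in> carrier G" and V: "V \<in> carrier G" and t: "t \<in> carrier G"
  shows "y [^] (m::int) \<otimes> V \<otimes> y [^] (n::int) \<otimes> commutator G y t
    = V \<otimes> y [^] (m + n) \<otimes> commutator G y (V [^] m \<otimes> t)"
proof -
  have "y [^] m \<otimes> V = V \<otimes> (inv V \<otimes> y [^] m \<otimes> V)"
    using y V by (simp add: m_assoc)
  also have "inv V \<otimes> y [^] m \<otimes> V = y [^] m \<otimes> commutator G (y [^] m) V"
    using y V by (simp add: conj_eq_mult_commutator)
  finally have "y [^] m \<otimes> V \<otimes> y [^] n \<otimes> commutator G y t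
      = V \<otimes> (y [^] m \<otimes> y [^] n) \<otimes> (commutator G (y [^] m) V \<otimes> commutator G y t)"
    using y V t commutator_central[of "y [^] m" V "y [^] n"] by (simp add: m_assoc)
  also have "commutator G (y [^] m) V \<otimes> commutator G y t = commutator G y (V [^] m \<otimes> t)"
    using y V t
    by (simp add: commutator_int_pow_left commutator_int_pow_right commutator_mult_right)
  finally show ?thesis
    using y by (simp add: int_pow_mult)
qed

lemma eval_word_twisted:
  assumes w: "w \<in> words k" and h: "\<And>i. i < k \<Longrightarrow> h i \<in> carrier G"
  shows "\<exists>t\<in>carrier G. \<forall>y\<in>carrier G. eval_word G w (\<lambda>i. h i \<otimes> y [^] c i) =
            eval_word G w h \<otimes> y [^] weighted_exponent_sum c w \<otimes> commutator G y t"
  using w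
proof (induction w)
  case Nil
  then show ?case by (intro bexI[of _ \<one>]) auto
next
  case (Cons l w)
  obtain i b where l: "l = (i, b)" by fastforce
  with Cons.prems have i: "i < k" and w: "w \<in> words k" by auto
  from Cons.IH[OF w] obtain t where t: "t \<in> carrier G" and
    IH: "\<And>y. y \<in> carrier G \<Longrightarrow> eval_word G w (\<lambda>i. h i \<otimes> y [^] c i)
           = eval_word G w h \<otimes> y [^] weighted_exponent_sum c w \<otimes> commutator G y t"
    by blast
  define W where "W = eval_word G w h"
  have W: "W \<in> carrier G" unfolding W_def using w h by simp
  have hi: "h i \<in> carrier G" using h i by simp
  show ?case
  proof (cases b)
    case True
    have "eval_word G (l # w) (\<lambda>i. h i \<otimes> y [^] c i)
        = eval_word G (l # w) h \<otimes> y [^] weighted_exponent_sum c (l # w)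
            \<otimes> commutator G y (W [^] c i \<otimes> t)"
      if y: "y \<in> carrier G" for y
      using int_pow_mult_commutator_shift[OF y W t, of "c i" "weighted_exponent_sum c w"]
        True l IH[OF y] hi W t y
      by (simp add: W_def m_assoc)
    then show ?thesis using W t by (intro bexI[of _ "W [^] c i \<otimes> t"]) auto
  next
    case False
    define V where "V = inv (h i) \<otimes> W"
    have V: "V \<in> carrier G" using hi W by (simp add: V_def)
    have "eval_word G (l # w) (\<lambda>i. h i \<otimes> y [^] c i)
        = eval_word G (l # w) h \<otimes> y [^] weighted_exponent_sum c (l # w)
            \<otimes> commutator G y (V [^] (- c i) \<otimes> t)"
      if y: "y \<in> carrier G" for y
      using int_pow_mult_commutator_shift[OF y V t, of "- c i" "weighted_exponent_sum c w"]
        False l IH[OF y] hi W t y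
      by (simp add: V_def W_def m_assoc inv_mult_group int_pow_neg)
    then show ?thesis using V t by (intro bexI[of _ "V [^] (- c i) \<otimes> t"]) auto
  qed
qed

lemma inj_on_int_pow_mult_commutator:
  assumes fin: "finite (carrier G)" and coprime: "coprime n (int (order G))"
    and t: "t \<in> carrier G"
  shows "inj_on (\<lambda>y. y [^] n \<otimes> commutator G y t) (carrier G)"
proof -
  have "gcd n (int (order G)) = 1"
    using coprime by (simp add: coprime_iff_gcd_eq_1)
  then obtain n' v where bezout: "n' * n + v * int (order G) = 1"
    using bezout_int[of n "int (order G)"] by metis
  have undo: "(y [^] n) [^] n' = y" if y: "y \<in> carrier G" for y
  proof -
    have "int (ord y) dvd int (order G)"
      using ord_dvd_group_order[OF y] fin by simp
    moreover have "1 - n * n' = int (order G) * v"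
      using bezout by (simp add: algebra_simps)
    ultimately have "int (ord y) dvd 1 - n * n'"
      by (metis dvd_mult2)
    then have "y [^] (n * n') = y [^] (1::int)"
      using int_pow_eq[OF y, of "n * n'" 1] by simp
    then show ?thesis using y by (simp add: int_pow_pow)
  qed
  define s where "s = t [^] n'"
  have s: "s \<in> carrier G" using t by (simp add: s_def)
  have conj: "y [^] n \<otimes> commutator G y t = inv s \<otimes> y [^] n \<otimes> s" if y: "y \<in> carrier G" for y
  proof -
    have "commutator G y t = commutator G ((y [^] n) [^] n') t"
      using undo[OF y] by simp
    also have "\<dots> = commutator G (y [^] n) s"
      using y t by (simp add: s_def commutator_int_pow_left commutator_int_pow_right)
    finally show ?thesis
      using y s by (simp add: conj_eq_mult_commutator)
  qed
  show ?thesis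
  proof (rule inj_onI)
    fix y z assume y: "y \<in> carrier G" and z: "z \<in> carrier G"
      and "y [^] n \<otimes> commutator G y t = z [^] n \<otimes> commutator G z t"
    then have "inv s \<otimes> y [^] n \<otimes> s = inv s \<otimes> z [^] n \<otimes> s"
      by (simp add: conj)
    then have "inv s \<otimes> y [^] n = inv s \<otimes> z [^] n"
      using y z s by (simp only: right_cancel m_closed inv_closed int_pow_closed)
    then have "y [^] n = z [^] n"
      using y z s by (simp only: Units_l_cancel Units_eq inv_closed int_pow_closed)
    then have "(y [^] n) [^] n' = (z [^] n) [^] n'"
      by simp
    then show "y = z"
      using undo[OF y] undo[OF z] by simp
  qed
qed

lemma inj_on_twisted_substitution_map:
  assumes fin: "finite (carrier G)" and k: "0 < k" and w: "w \<in> words k" and c0: "c 0 = 1"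
    and coprime: "coprime (weighted_exponent_sum c w) (int (order G))"
  shows "inj_on (substitution_map G k (twisted_substitution w c)) (tuples G k)"
proof (rule inj_onI)
  let ?T = "substitution_map G k (twisted_substitution w c)"
    and ?A = "weighted_exponent_sum c w"
  fix g g' assume g: "g \<in> tuples G k" and g': "g' \<in> tuples G k" and eq: "?T g = ?T g'"
  define h where "h i = (if i = 0 then \<one> else ?T g i)" for i
  have h: "h i \<in> carrier G" if "i < k" for i
    using substitution_map_in_tuples[of k "twisted_substitution w c", OF _ g] that
      twisted_substitution_in_words[OF k w]
    by (simp add: h_def tuples_in_carrier)
  have untwist: "x i = h i \<otimes> x 0 [^] c i"
    if x: "x \<in> tuples G k" and "?T x = ?T g" and "i < k" for x i
    using untwist_substitution_map[where c = c and w = w, OF k c0 x \<open>i < k\<close>] that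
    by (simp add: h_def)
  have "\<exists>t\<in>carrier G. \<forall>y\<in>carrier G. eval_word G w (\<lambda>i. h i \<otimes> y [^] c i)
      = eval_word G w h \<otimes> y [^] ?A \<otimes> commutator G y t"
    using h by (rule eval_word_twisted[OF w])
  then obtain t where t: "t \<in> carrier G" and twisted:
    "\<forall>y\<in>carrier G. eval_word G w (\<lambda>i. h i \<otimes> y [^] c i)
       = eval_word G w h \<otimes> y [^] ?A \<otimes> commutator G y t"
    by blast
  have eval_w: "eval_word G w x = eval_word G w h \<otimes> (x 0 [^] ?A \<otimes> commutator G (x 0) t)"
    if x: "x \<in> tuples G k" and "?T x = ?T g" for x
  proof -
    have "eval_word G w x = eval_word G w (\<lambda>i. h i \<otimes> x 0 [^] c i)"
      using untwist[OF that] by (rule eval_word_cong[OF w])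
    then show ?thesis
      using twisted tuples_in_carrier[OF x k] w h t by (simp add: m_assoc)
  qed
  have "eval_word G w g = eval_word G w g'"
    using fun_cong[OF eq, of 0] substitution_map_twisted[OF k g k, of w c]
      substitution_map_twisted[OF k g' k, of w c]
    by simp
  then have "g 0 [^] ?A \<otimes> commutator G (g 0) t = g' 0 [^] ?A \<otimes> commutator G (g' 0) t"
    using eval_w[OF g refl] eval_w[OF g' eq[symmetric]] tuples_in_carrier[OF g k]
      tuples_in_carrier[OF g' k] w h t
    by simp
  then have "g 0 = g' 0"
    using inj_on_int_pow_mult_commutator[OF fin coprime t] tuples_in_carrier[OF g k]
      tuples_in_carrier[OF g' k]
    by (auto dest: inj_onD)
  then have "g i = g' i" if "i < k" for i
    using untwist[OF g refl that] untwist[OF g' eq[symmetric] that] by simp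
  moreover have "g \<in> extensional {0..<k}" and "g' \<in> extensional {0..<k}"
    using g g' by (auto simp: tuples_def PiE_def)
  ultimately show "g = g'"
    by (intro extensionalityI) auto
qed

end

section \<open>Exponent sums and the abelianization\<close>

lemma (in group_hom) hom_eval_word:
  assumes "w \<in> words k" and "\<And>i. i < k \<Longrightarrow> g i \<in> carrier G"
  shows "h (eval_word G w g) = eval_word H w (\<lambda>i. h (g i))"
  using assms by (induction w) (auto simp: hom_inv)

lemma (in comm_group) finprod_nat_pow:
  assumes "finite A" and "f \<in> A \<rightarrow> carrier G"
  shows "(\<Otimes>i\<in>A. f i [^] (n::nat)) = (\<Otimes>i\<in>A. f i) [^] n"
  using assms
proof (induction A rule: finite_induct)
  case (insert a A)
  then have fa: "f a \<in> carrier G" and fA: "f \<in> A \<rightarrow> carrier G" by auto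
  have "(\<Otimes>i\<in>insert a A. f i [^] n) = f a [^] n \<otimes> (\<Otimes>i\<in>A. f i [^] n)"
    using insert fa fA by (intro finprod_insert) auto
  also have "\<dots> = (f a \<otimes> (\<Otimes>i\<in>A. f i)) [^] n"
    using insert fa fA by (simp add: pow_mult_distrib m_comm)
  also have "f a \<otimes> (\<Otimes>i\<in>A. f i) = (\<Otimes>i\<in>insert a A. f i)"
    using insert fa fA by simp
  finally show ?case .
qed simp

lemma (in comm_group) eval_word_eq_finprod:
  assumes "w \<in> words k" and g: "\<And>i. i < k \<Longrightarrow> g i \<in> carrier G"
  shows "eval_word G w g = (\<Otimes>i\<in>{0..<k}. g i [^] exponent_sum w i)"
  using assms(1)
proof (induction w)
  case Nil
  then show ?case by simp
next
  case (Cons l w)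
  obtain j b where l: "l = (j, b)" by fastforce
  with Cons.prems have j: "j < k" and w: "w \<in> words k" by auto
  define s :: int where "s = (if b then 1 else - 1)"
  have "eval_word G (l # w) g = g j [^] s \<otimes> (\<Otimes>i\<in>{0..<k}. g i [^] exponent_sum w i)"
    using Cons.IH[OF w] g j by (simp add: l s_def int_pow_neg)
  also have "g j [^] s = (\<Otimes>i\<in>{0..<k}. if j = i then g i [^] s else \<one>)"
    using j g by (simp add: finprod_singleton)
  also have "\<dots> \<otimes> (\<Otimes>i\<in>{0..<k}. g i [^] exponent_sum w i)
      = (\<Otimes>i\<in>{0..<k}. (if j = i then g i [^] s else \<one>) \<otimes> g i [^] exponent_sum w i)"
    using g by (intro finprod_multf[symmetric]) auto
  also have "\<dots> = (\<Otimes>i\<in>{0..<k}. g i [^] exponent_sum (l # w) i)"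
    using g by (intro finprod_cong') (auto simp: l s_def int_pow_mult)
  finally show ?case .
qed

context group
begin

lemma commutator_in_derived:
  assumes "x \<in> carrier G" and "y \<in> carrier G"
  shows "commutator G x y \<in> derived G (carrier G)"
proof -
  have "commutator G x y = inv x \<otimes> inv y \<otimes> inv (inv x) \<otimes> inv (inv y)"
    using assms by (simp add: commutator_def)
  moreover have "inv x \<otimes> inv y \<otimes> inv (inv x) \<otimes> inv (inv y) \<in> derived_set G (carrier G)"
    using assms by (intro UN_I[of "inv x"] UN_I[of "inv y"]) auto
  ultimately have "commutator G x y \<in> derived_set G (carrier G)"
    by simp
  then show ?thesis
    unfolding derived_def by (rule generate.incl)
qed

lemma derived_set_commutator:
  assumes "h \<in> derived_set G (carrier G)"
  obtains a b where "a \<in> carrier G" and "b \<in> carrier G" and "h = commutator G a b"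
proof -
  obtain x y where "x \<in> carrier G" "y \<in> carrier G" "h = x \<otimes> y \<otimes> inv x \<otimes> inv y"
    using assms by blast
  then show ?thesis
    using that[of "inv x" "inv y"] by (simp add: commutator_def)
qed

lemma abelianization_pow_surj_if_surj_word:
  assumes w: "w \<in> words k" and surj: "eval_word G w ` tuples G k = carrier G"
    and dvd: "\<And>i. i < k \<Longrightarrow> int p dvd exponent_sum w i"
    and q: "q \<in> carrier (G Mod derived G (carrier G))"
  shows "\<exists>r\<in>carrier (G Mod derived G (carrier G)). q = r [^]\<^bsub>G Mod derived G (carrier G)\<^esub> p"
proof -
  let ?D = "derived G (carrier G)"
  let ?Q = "G Mod ?D"
  interpret Q: comm_group ?Q by (rule derived_quot_is_comm_group)
  interpret \<pi>: group_hom G ?Q "(#>) ?D"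
    using derived_self_is_normal by (simp add: group_hom_def group_hom_axioms_def
        normal.r_coset_hom_Mod is_group Q.is_group)
  obtain x where x: "x \<in> carrier G" and qx: "q = ?D #> x"
    using q by (auto simp: carrier_FactGroup)
  then obtain g where g: "g \<in> tuples G k" and xg: "x = eval_word G w g"
    using surj by blast
  define b where "b i = exponent_sum w i div int p" for i
  have gQ: "(\<lambda>i. ?D #> g i) \<in> {0..<k} \<rightarrow> carrier ?Q"
    using tuples_in_carrier[OF g] by (auto simp: carrier_FactGroup)
  have "q = eval_word ?Q w (\<lambda>i. ?D #> g i)"
    using qx xg w tuples_in_carrier[OF g] by (simp add: \<pi>.hom_eval_word)
  also have "\<dots> = (\<Otimes>\<^bsub>?Q\<^esub>i\<in>{0..<k}. (?D #> g i) [^]\<^bsub>?Q\<^esub> exponent_sum w i)"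
    using gQ by (intro Q.eval_word_eq_finprod[OF w]) auto
  also have "\<dots> = (\<Otimes>\<^bsub>?Q\<^esub>i\<in>{0..<k}. ((?D #> g i) [^]\<^bsub>?Q\<^esub> b i) [^]\<^bsub>?Q\<^esub> p)"
  proof (intro Q.finprod_cong')
    fix i assume i: "i \<in> {0..<k}"
    then have "exponent_sum w i = b i * int p"
      using dvd by (simp add: b_def)
    moreover have "?D #> g i \<in> carrier ?Q"
      using gQ i by blast
    ultimately show "(?D #> g i) [^]\<^bsub>?Q\<^esub> exponent_sum w i
        = ((?D #> g i) [^]\<^bsub>?Q\<^esub> b i) [^]\<^bsub>?Q\<^esub> p"
      by (simp add: Q.int_pow_pow flip: int_pow_int)
  qed (use gQ in auto)
  also have "\<dots> = (\<Otimes>\<^bsub>?Q\<^esub>i\<in>{0..<k}. (?D #> g i) [^]\<^bsub>?Q\<^esub> b i) [^]\<^bsub>?Q\<^esub> p"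
    using gQ by (intro Q.finprod_nat_pow) auto
  finally show ?thesis
    using gQ by (auto intro: Q.finprod_closed)
qed

lemma subgroup_pow_image:
  assumes H: "subgroup H G" and comm: "\<And>x y. x \<in> H \<Longrightarrow> y \<in> H \<Longrightarrow> x \<otimes> y = y \<otimes> x"
  shows "subgroup ((\<lambda>x. x [^] (n::nat)) ` H) G"
proof (rule subgroupI)
  show "(\<lambda>x. x [^] n) ` H \<subseteq> carrier G"
    using subgroup.subset[OF H] by auto
  show "(\<lambda>x. x [^] n) ` H \<noteq> {}"
    using subgroup.one_closed[OF H] by blast
next
  fix a assume "a \<in> (\<lambda>x. x [^] n) ` H"
  then obtain x where x: "x \<in> H" and "a = x [^] n" by blast
  then have "inv a = inv x [^] n"
    using subgroup.mem_carrier[OF H x] by (simp add: nat_pow_inv)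
  then show "inv a \<in> (\<lambda>x. x [^] n) ` H"
    using subgroup.m_inv_closed[OF H x] by blast
next
  fix a b assume "a \<in> (\<lambda>x. x [^] n) ` H" and "b \<in> (\<lambda>x. x [^] n) ` H"
  then obtain x y where x: "x \<in> H" and y: "y \<in> H" and "a = x [^] n" and "b = y [^] n"
    by blast
  then have "a \<otimes> b = (x \<otimes> y) [^] n"
    using subgroup.mem_carrier[OF H] by (simp add: pow_mult_distrib[OF comm])
  then show "a \<otimes> b \<in> (\<lambda>x. x [^] n) ` H"
    using subgroup.m_closed[OF H x y] by blast
qed

lemma exists_pow_prime_eq_one:
  assumes fin: "finite (carrier G)" and p: "Factorial_Ring.prime p" and dvd: "p dvd order G"
  obtains u where "u \<in> carrier G" and "u \<noteq> \<one>" and "u [^] p = \<one>"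
proof -
  obtain m where "order G = p ^ 1 * m" using dvd by auto
  then obtain H where H: "subgroup H G" and card: "card H = p"
    using sylow_thm[OF p is_group _ fin] by fastforce
  have "\<not> H \<subseteq> {\<one>}"
  proof
    assume "H \<subseteq> {\<one>}"
    then have "card H \<le> 1"
      using card_mono[of "{\<one>}" H] by simp
    then show False
      using card prime_gt_1_nat[OF p] by simp
  qed
  then obtain u where u: "u \<in> H" and "u \<noteq> \<one>" by blast
  interpret H: group "G\<lparr>carrier := H\<rparr>"
    using H by (rule subgroup.subgroup_is_group) (rule is_group)
  have "u [^]\<^bsub>G\<lparr>carrier := H\<rparr>\<^esub> order (G\<lparr>carrier := H\<rparr>) = \<one>\<^bsub>G\<lparr>carrier := H\<rparr>\<^esub>"
    using u by (intro H.pow_order_eq_1) simp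
  then have "u [^] p = \<one>"
    using H card by (simp add: order_def flip: nat_pow_consistent)
  with subgroup.mem_carrier[OF H u] \<open>u \<noteq> \<one>\<close> show ?thesis
    by (rule that)
qed

end

context central_commutator_group
begin

lemma derived_central:
  assumes "d \<in> derived G (carrier G)" and z: "z \<in> carrier G"
  shows "d \<otimes> z = z \<otimes> d"
  using assms(1) unfolding derived_def
proof (induction d rule: generate.induct)
  case one
  then show ?case using z by simp
next
  case (incl h)
  then obtain a b where "a \<in> carrier G" "b \<in> carrier G" "h = commutator G a b"
    by (rule derived_set_commutator)
  then show ?case
    using z by (simp add: commutator_central)
next
  case (inv h)
  then obtain a b where "a \<in> carrier G" "b \<in> carrier G" "h = commutator G a b"
    by (rule derived_set_commutator)
  then show ?case
    using z by (simp add: inv_commutator commutator_central)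
next
  case (eng h1 h2)
  then have "h1 \<in> carrier G" and "h2 \<in> carrier G"
    using generate_in_carrier derived_set_in_carrier by blast+
  then show ?case
    using eng.IH z by (metis m_assoc)
qed

context
  fixes p :: nat
  assumes pow_surj: "\<And>q. q \<in> carrier (G Mod derived G (carrier G))
    \<Longrightarrow> \<exists>r\<in>carrier (G Mod derived G (carrier G)). q = r [^]\<^bsub>G Mod derived G (carrier G)\<^esub> p"
begin

lemma commutator_eq_pow_derived:
  assumes a: "a \<in> carrier G" and b: "b \<in> carrier G"
  shows "\<exists>e\<in>derived G (carrier G). commutator G a b = e [^] p"
proof -
  let ?D = "derived G (carrier G)"
  have D: "subgroup ?D G" by (rule derived_is_subgroup) simp
  have "?D #> a \<in> carrier (G Mod ?D)"
    using a by (auto simp: carrier_FactGroup)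
  then obtain r where "r \<in> carrier (G Mod ?D)" and "?D #> a = r [^]\<^bsub>G Mod ?D\<^esub> p"
    using pow_surj by blast
  then obtain z where z: "z \<in> carrier G" and "?D #> a = ?D #> (z [^] p)"
    using hom_nat_pow[OF normal.r_coset_hom_Mod[OF derived_self_is_normal] _ is_group
        derived_quot_is_group]
    by (auto simp: carrier_FactGroup)
  then have "a \<in> ?D #> (z [^] p)"
    using rcos_self[OF a D] by simp
  then obtain d where d: "d \<in> ?D" and "a = d \<otimes> z [^] p"
    by (auto simp: r_coset_def)
  moreover have "d \<in> carrier G"
    using d D subgroup.subset by blast
  moreover have "commutator G d b = \<one>"
    using derived_central[OF d b] \<open>d \<in> carrier G\<close> b by (simp add: commutator_def m_assoc)
  ultimately have "commutator G a b = commutator G z b [^] p"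
    using z b by (simp add: commutator_mult_left commutator_nat_pow_left)
  then show ?thesis
    using commutator_in_derived[OF z b] by blast
qed

lemma derived_subset_pow_image:
  "derived G (carrier G) \<subseteq> (\<lambda>e. e [^] p) ` derived G (carrier G)"
proof -
  let ?D = "derived G (carrier G)"
  have D: "subgroup ?D G"
    by (simp add: derived_is_subgroup)
  have "subgroup ((\<lambda>e. e [^] p) ` ?D) G"
  proof (rule subgroup_pow_image[OF D])
    fix x y assume "x \<in> ?D" and "y \<in> ?D"
    then show "x \<otimes> y = y \<otimes> x"
      by (intro derived_central subgroup.mem_carrier[OF D])
  qed
  moreover have "derived_set G (carrier G) \<subseteq> (\<lambda>e. e [^] p) ` ?D"
  proof
    fix h assume "h \<in> derived_set G (carrier G)"
    then obtain a b where "a \<in> carrier G" "b \<in> carrier G" "h = commutator G a b"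
      by (rule derived_set_commutator)
    then show "h \<in> (\<lambda>e. e [^] p) ` ?D"
      unfolding image_iff using commutator_eq_pow_derived by simp
  qed
  ultimately have "generate G (derived_set G (carrier G)) \<subseteq> (\<lambda>e. e [^] p) ` ?D"
    by (intro generate_subgroup_incl)
  then show ?thesis
    by (simp only: derived_def)
qed

lemma mem_derived_if_pow_eq_one:
  assumes fin: "finite (carrier G)" and u: "u \<in> carrier G" and "u [^] p = \<one>"
  shows "u \<in> derived G (carrier G)"
proof -
  let ?D = "derived G (carrier G)"
  let ?Q = "G Mod ?D"
  interpret Q: comm_group ?Q by (rule derived_quot_is_comm_group)
  have D: "subgroup ?D G" by (rule derived_is_subgroup) simp
  have inj_pow_Q: "inj_on (\<lambda>q. q [^]\<^bsub>?Q\<^esub> p) (carrier ?Q)"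
  proof (rule finite_surj_inj)
    show "finite (carrier ?Q)"
      using fin by (simp add: carrier_FactGroup)
    show "carrier ?Q \<subseteq> (\<lambda>q. q [^]\<^bsub>?Q\<^esub> p) ` carrier ?Q"
      using pow_surj by blast
  qed
  have "(?D #> u) [^]\<^bsub>?Q\<^esub> p = ?D #> (u [^] p)"
    using hom_nat_pow[OF normal.r_coset_hom_Mod[OF derived_self_is_normal] u is_group
        derived_quot_is_group, of p] by simp
  also have "\<dots> = \<one>\<^bsub>?Q\<^esub> [^]\<^bsub>?Q\<^esub> p"
    using \<open>u [^] p = \<one>\<close> coset_mult_one[OF subgroup.subset[OF D]]
    by (simp del: one_FactGroup) simp
  finally have "(?D #> u) [^]\<^bsub>?Q\<^esub> p = \<one>\<^bsub>?Q\<^esub> [^]\<^bsub>?Q\<^esub> p" .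
  then have "?D #> u = \<one>\<^bsub>?Q\<^esub>"
    by (rule inj_onD[OF inj_pow_Q]) (use u Q.one_closed in \<open>auto simp: carrier_FactGroup\<close>)
  then have "?D #> u = ?D"
    by simp
  then show ?thesis
    using u D by (rule coset_join1)
qed

lemma eq_one_if_pow_eq_one:
  assumes fin: "finite (carrier G)" and u: "u \<in> carrier G" and "u [^] p = \<one>"
  shows "u = \<one>"
proof -
  let ?D = "derived G (carrier G)"
  have D: "subgroup ?D G" by (rule derived_is_subgroup) simp
  have "inj_on (\<lambda>d. d [^] p) ?D"
  proof (rule finite_surj_inj)
    show "finite ?D"
      using fin subgroup.subset[OF D] by (rule finite_subset[rotated])
    show "?D \<subseteq> (\<lambda>d. d [^] p) ` ?D"
      by (rule derived_subset_pow_image)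
  qed
  moreover have "u [^] p = \<one> [^] p"
    using \<open>u [^] p = \<one>\<close> by simp
  ultimately show "u = \<one>"
    using mem_derived_if_pow_eq_one[OF assms] subgroup.one_closed[OF D] by (rule inj_onD)
qed

end

lemma prime_not_dvd_all_exponent_sums:
  assumes fin: "finite (carrier G)" and w: "w \<in> words k"
    and surj: "eval_word G w ` tuples G k = carrier G"
    and p: "Factorial_Ring.prime p" and dvd: "p dvd order G"
  shows "\<exists>i<k. \<not> int p dvd exponent_sum w i"
proof (rule ccontr)
  assume "\<not> (\<exists>i<k. \<not> int p dvd exponent_sum w i)"
  then have "\<And>q. q \<in> carrier (G Mod derived G (carrier G)) \<Longrightarrow>
      \<exists>r\<in>carrier (G Mod derived G (carrier G)). q = r [^]\<^bsub>G Mod derived G (carrier G)\<^esub> p"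
    using abelianization_pow_surj_if_surj_word[OF w surj] by blast
  moreover obtain u where "u \<in> carrier G" and "u \<noteq> \<one>" and "u [^] p = \<one>"
    using exists_pow_prime_eq_one[OF fin p dvd] .
  ultimately show False
    using eq_one_if_pow_eq_one[OF _ fin] by blast
qed

end

section \<open>A coprime integer combination of the exponent sums\<close>

lemma exists_combination_dvd_all:
  fixes a :: "nat \<Rightarrow> int"
  assumes "finite I"
  shows "\<exists>\<beta> d. (\<forall>i\<in>I. d dvd a i) \<and> (\<Sum>i\<in>I. \<beta> i * a i) = d"
  using assms
proof (induction I rule: finite_induct)
  case empty
  show ?case by simp
next
  case (insert j I)
  then obtain \<beta> d where d: "\<forall>i\<in>I. d dvd a i" and sum: "(\<Sum>i\<in>I. \<beta> i * a i) = d"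
    by blast
  obtain u v where uv: "u * d + v * a j = gcd d (a j)"
    using bezout_int by blast
  define \<beta>' where "\<beta>' i = (if i = j then v else u * \<beta> i)" for i
  have "(\<Sum>i\<in>I. \<beta>' i * a i) = (\<Sum>i\<in>I. u * (\<beta> i * a i))"
    using insert.hyps(2) by (intro sum.cong) (auto simp: \<beta>'_def)
  then have "(\<Sum>i\<in>insert j I. \<beta>' i * a i) = v * a j + u * (\<Sum>i\<in>I. \<beta> i * a i)"
    using insert.hyps by (simp add: \<beta>'_def sum_distrib_left)
  also have "\<dots> = gcd d (a j)"
    using sum uv by simp
  finally show ?case
    using d by (intro exI[of _ \<beta>'] exI[of _ "gcd d (a j)"]) (auto intro: dvd_trans[OF gcd_dvd1])
qed

lemma prime_common_divisor_if_not_coprime: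
  fixes x :: int and N :: nat
  assumes "0 < N" and "\<not> coprime x (int N)"
  obtains q where "Factorial_Ring.prime q" and "int q dvd x" and "q dvd N"
proof -
  obtain c where c: "c dvd x" "c dvd int N" "\<not> is_unit c"
    using assms(2) by (rule not_coprimeE)
  then have "c \<noteq> 0"
    using assms(1) by auto
  then obtain r where r: "Factorial_Ring.prime r" "r dvd c"
    using prime_divisor_exists c(3) by blast
  then have "r = int (nat r)" and "Factorial_Ring.prime (nat r)"
    using prime_gt_0_int[OF r(1)] by (auto simp: prime_nat_iff_prime)
  then show ?thesis
    using that[of "nat r"] r(2) c(1,2) dvd_trans by (metis int_dvd_int_iff)
qed

lemma exists_coprime_combination:
  fixes a :: "nat \<Rightarrow> int" and N :: nat
  assumes k: "0 < k" and N: "0 < N"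
    and not_dvd: "\<And>p. Factorial_Ring.prime p \<Longrightarrow> p dvd N \<Longrightarrow> \<exists>i<k. \<not> int p dvd a i"
  shows "\<exists>c. c 0 = 1 \<and> coprime (\<Sum>i\<in>{0..<k}. c i * a i) (int N)"
proof -
  obtain \<beta> d where d: "\<forall>i\<in>{1..<k}. d dvd a i" and sum: "(\<Sum>i\<in>{1..<k}. \<beta> i * a i) = d"
    using exists_combination_dvd_all[of "{1..<k}" a] by auto
  define P where "P = {q \<in> {..N}. Factorial_Ring.prime q \<and> q dvd N \<and> \<not> int q dvd a 0}"
  define M where "M = \<Prod>P"
  define c where "c i = (if i = 0 then 1 else int M * \<beta> i)" for i
  have "(\<Sum>i\<in>{1..<k}. c i * a i) = int M * (\<Sum>i\<in>{1..<k}. \<beta> i * a i)"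
    by (simp add: sum_distrib_left c_def mult.assoc)
  moreover have "{0..<k} = insert 0 {1..<k}"
    using k by auto
  ultimately have c_sum: "(\<Sum>i\<in>{0..<k}. c i * a i) = a 0 + int M * d"
    using sum by (simp add: c_def)
  have M_dvd: "int q dvd int M \<longleftrightarrow> \<not> int q dvd a 0"
    if q: "Factorial_Ring.prime q" "q dvd N" for q
  proof -
    have "q dvd M \<longleftrightarrow> q \<in> P"
    proof
      assume "q dvd M"
      then obtain r where "r \<in> P" and "q dvd r"
        using prime_dvd_prod_iff[of P q id] q(1) by (auto simp: M_def P_def)
      then show "q \<in> P"
        using q(1) primes_dvd_imp_eq by (auto simp: P_def)
    qed (auto simp: M_def P_def)
    then show ?thesis
      using q N by (auto simp: P_def dest: dvd_imp_le)
  qed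
  have "coprime (a 0 + int M * d) (int N)"
  proof (rule ccontr)
    assume "\<not> coprime (a 0 + int M * d) (int N)"
    then obtain q where q: "Factorial_Ring.prime q" "int q dvd a 0 + int M * d" "q dvd N"
      by (rule prime_common_divisor_if_not_coprime[OF N])
    show False
    proof (cases "int q dvd a 0")
      case True
      then obtain i where i: "i < k" "\<not> int q dvd a i"
        using not_dvd q by blast
      then have "i \<in> {1..<k}"
        using True by (cases "i = 0") auto
      then have "\<not> int q dvd d"
        using d i(2) dvd_trans by blast
      moreover have "int q dvd int M * d"
        using q(2) True by (simp add: dvd_add_right_iff)
      ultimately show False
        using M_dvd[OF q(1,3)] True prime_dvd_multD[of "int q" "int M" d] q(1) by auto
    next
      case False
      then have "int q dvd int M * d"
        using M_dvd[OF q(1,3)] by simp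
      then show False
        using q(2) False by (simp add: dvd_add_left_iff)
    qed
  qed
  then show ?thesis
    using c_sum by (intro exI[of _ c]) (simp add: c_def)
qed

theorem corollary3p6:
  fixes G :: "('a, 'b) monoid_scheme" and k :: nat and w :: "letter list"
  assumes "group G" and "finite (carrier G)" and "nilpotent_class_2 G"
    and "w \<in> words k"
    and "word_map_surjective G k w"
  shows "automorphic G k w gen1
    \<and> (\<forall>x \<in> carrier G. word_prob G k w x = 1 / real (card (carrier G)))
    \<and> (\<forall>x \<in> carrier G. word_prob G k w x \<ge> 1 / real (card (carrier G)))"
proof -
  note fin = assms(2) and w = assms(4)
  interpret central_commutator_group G
    using assms(3) by (simp add: nilpotent_class_2_def central_commutator_group_def
        central_commutator_group_axioms_def)
  have surj: "eval_word G w ` tuples G k = carrier G"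
    using assms(5) by (simp add: word_map_surjective_def)
  have "carrier G \<noteq> {\<one>\<^bsub>G\<^esub>}"
    using assms(3) by (auto simp: nilpotent_class_2_def)
  then have k: "0 < k"
    using surj w by (cases w) (auto simp: tuples_def)
  have "0 < order G"
    using fin one_closed by (auto simp: order_def card_gt_0_iff)
  then obtain c where c0: "c 0 = 1"
    and "coprime (\<Sum>i\<in>{0..<k}. c i * exponent_sum w i) (int (order G))"
    using exists_coprime_combination[OF k] prime_not_dvd_all_exponent_sums[OF fin w surj] by blast
  define \<sigma> where "\<sigma> = twisted_substitution w c"
  have \<sigma>: "\<And>i. i < k \<Longrightarrow> \<sigma> i \<in> words k" and \<sigma>0: "\<sigma> 0 = w"
    using twisted_substitution_in_words[OF k w] by (simp_all add: \<sigma>_def twisted_substitution_def)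
  have inj: "inj_on (substitution_map G k \<sigma>) (tuples G k)"
    using inj_on_twisted_substitution_map[where c = c, OF fin k w c0] \<open>coprime _ _\<close>
    by (simp add: \<sigma>_def weighted_exponent_sum_eq_sum[OF w])
  show ?thesis
    using automorphic_gen1_if_inj_substitution[OF \<sigma> fin inj k \<sigma>0]
      word_prob_if_inj_substitution[OF \<sigma> fin inj k \<sigma>0]
    by simp
qed

end
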